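(* For all $\ell,n\ge1$ there is a bijection $\Psi:G_{\ell,n}\to G_{\ell,n}$ such that for every $\sigma\in G_{\ell,n}$, $\mathrm{Der}(\Psi(\sigma))=\mathrm{Der}(\sigma)$ and $$(\mathrm{maf},\mathrm{exc},\mathrm{fix},\mathrm{col})\,\Psi(\sigma)=(\mathrm{maj},\mathrm{exc},\mathrm{fix},\mathrm{col})\,\sigma .$$
   Context: Let $\zeta=e^{2\pi i/\ell}$, $\Sigma_{\ell,n}=\{\zeta^jk:0\le j\le\ell-1,\ 1\le k\le n\}$, and $G_{\ell,n}$ the set of permutations $\sigma$ of $\Sigma_{\ell,n}$ with $\sigma(\zeta^jk)=\zeta^j\sigma(k)$, written as $x_1\cdots x_n$ with $x_i=\sigma(i)$. For $x=\zeta^jk$, $\varepsilon_x=\zeta^j$, $|x|=k$. Order $1>\zeta>\cdots>\zeta^{\ell-1}$ and $\Sigma_{\ell,n}$ by: $x<y$ iff $\varepsilon_x<\varepsilon_y$, or $\varepsilon_x=\varepsilon_y$ and $|x|<|y|$ ($i\in[n]$ identified with $\zeta^0i$). $\mathrm{maj}\,w=\sum_i i\,\chi(w_i>w_{i+1})$ for a word $w$. $\mathrm{FIX}(\sigma)=\{i:x_i=i\}$, $\mathrm{fix}=|\mathrm{FIX}|$; $\mathrm{exc}\,\sigma=\#\{i:x_i>i\}$; $\mathrm{col}\,\sigma=\sum_i j_i$ with $x_i=\zeta^{j_i}|x_i|$, $0\le j_i<\ell$. $\mathrm{Der}(\sigma)$: delete fixed points giving $y_1\cdots y_m$, then $\mathrm{Der}(\sigma)=z_1\cdots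 z_m$, $z_i=\varepsilon_{y_i}\mathrm{rank}(|y_i|)$, rank the increasing bijection $\{|y_1|,\dots,|y_m|\}\to[m]$. If $\mathrm{FIX}(\sigma)=\{i_1<\dots<i_k\}$, $\mathrm{maf}\,\sigma=\mathrm{maj}\,\mathrm{Der}(\sigma)+\sum_{j=1}^k(i_j-j)$. *)

theory Defs
  imports Main
begin

text \<open>An element zeta^j * k of Sigma_{l,n} is encoded as the pair (j, k) with 0 <= j < l, 1 <= k <= n.
  A colored permutation sigma in G_{l,n} is encoded by its word x_1 ... x_n as a list of pairs
  (position i is list index i - 1).\<close>

definition G :: "nat \<Rightarrow> nat \<Rightarrow> (nat \<times> nat) list set" where
  "G l n = {w. length w = n \<and> distinct (map snd w) \<and> set (map snd w) = {1..n}
              \<and> (\<forall>x\<in>set w. fst x < l)}"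

text \<open>Order: 1 > zeta > ... > zeta^(l-1); x < y iff eps_x < eps_y, or equal colors and |x| < |y|.\<close>
definition cless :: "nat \<times> nat \<Rightarrow> nat \<times> nat \<Rightarrow> bool" where
  "cless x y \<longleftrightarrow> fst y < fst x \<or> (fst x = fst y \<and> snd x < snd y)"

definition maj :: "(nat \<times> nat) list \<Rightarrow> nat" where
  "maj w = (\<Sum>i\<in>{1..<length w}. if cless (w ! i) (w ! (i - 1)) then i else 0)"

definition FIX :: "(nat \<times> nat) list \<Rightarrow> nat set" where
  "FIX s = {i\<in>{1..length s}. s ! (i - 1) = (0, i)}"

definition fixn :: "(nat \<times> nat) list \<Rightarrow> nat" where
  "fixn s = card (FIX s)"

definition exc :: "(nat \<times> nat) list \<Rightarrow> nat" where
  "exc s = card {i\<in>{1..length s}. cless (0, i) (s ! (i - 1))}"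

definition col :: "(nat \<times> nat) list \<Rightarrow> nat" where
  "col s = sum_list (map fst s)"

definition Der :: "(nat \<times> nat) list \<Rightarrow> (nat \<times> nat) list" where
  "Der s = (let ys = map snd (filter (\<lambda>(i, x). x \<noteq> (0, i)) (zip [1..<length s + 1] s));
                S = snd ` set ys;
                rank = (\<lambda>k. card {a\<in>S. a \<le> k})
            in map (\<lambda>(c, k). (c, rank k)) ys)"

definition maf :: "(nat \<times> nat) list \<Rightarrow> nat" where
  "maf s = maj (Der s) +
     (let L = sorted_list_of_set (FIX s) in \<Sum>j<length L. L ! j - (j + 1))"

end

theory Submission
  imports Defs "HOL-Library.Multiset"
begin

text \<open>
  Encode a colored permutation s by its derangement part Der s and its
  fixed-point pattern fb s, the 0/1-word whose i-th letter records whether i is a fixed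
  point.  This encoding is injective, and for a fixed derangement part d with m letters the
  patterns that occur are exactly all words with m letters False (reconstruction).  On the
  fibre {Der s = d, fix s = k} both statistics become statistics of the pattern b:
  maf s = maj d + winv b, where winv counts the pairs (False before True), and
  maj s = pmaj b, the major index of the word obtained by inserting the fixed points
  described by b into d.  Both statistics have the same distribution over all words b with
  m letters False and k letters True, namely q^(maj d) times the Gaussian binomial
  [m + k choose k]_q, encoded as the multiset qbin (m + 1) k.  For pmaj this is proved by
  recursion on the last letter of b; it uses that d has no fixed points, which makes the
  excedance and descent data of d compatible.  Equidistribution on every fibre gives a
  bijection of each fibre onto itself carrying maj to maf, and gluing these bijections
  gives the theorem; exc and col are functions of the derangement part, hence preserved.
\<close>

section \<open>Shifted multisets and Gaussian binomial multisets\<close>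

(* A multiset of naturals stands for the generating polynomial sum q^x; shifting by c
   multiplies it by q^c. *)
definition mshift :: "nat \<Rightarrow> nat multiset \<Rightarrow> nat multiset" where
  "mshift c M = image_mset ((+) c) M"

lemma mshift_simps [simp]:
  "mshift c {#} = {#}"
  "mshift c (add_mset x M) = add_mset (c + x) (mshift c M)"
  "mshift c (M + N) = mshift c M + mshift c N"
  "mshift a (mshift b M) = mshift (a + b) M"
  by (simp_all add: mshift_def multiset.map_comp comp_def add.assoc[symmetric])

lemma mshift_0 [simp]: "mshift 0 M = M"
  by (induction M) simp_all

lemma image_mset_snoc:
  "image_mset f (mset_set ((\<lambda>b. b @ [x]) ` A)) = image_mset (\<lambda>b. f (b @ [x])) (mset_set A)"
proof -
  have "inj_on (\<lambda>b. b @ [x]) A" by (auto simp: inj_on_def)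
  then show ?thesis by (simp add: image_mset_mset_set[symmetric] multiset.map_comp comp_def)
qed

lemma image_mset_shift:
  assumes "finite A" and "\<And>b. b \<in> A \<Longrightarrow> f b = c + g b"
  shows "image_mset f (mset_set A) = mshift c (image_mset g (mset_set A))"
proof -
  have "image_mset f (mset_set A) = image_mset (\<lambda>b. c + g b) (mset_set A)"
    using assms by (intro image_mset_cong) simp
  then show ?thesis by (simp add: mshift_def multiset.map_comp comp_def)
qed

lemma image_mset_transfer:
  assumes "finite C" and "bij_betw h C B" and "\<And>y. y \<in> C \<Longrightarrow> F y = F' (h y)"
  shows "image_mset F (mset_set C) = image_mset F' (mset_set B)"
proof -
  have "image_mset F (mset_set C) = image_mset (\<lambda>y. F' (h y)) (mset_set C)"
    using assms(1,3) by (intro image_mset_cong) simp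
  also have "\<dots> = image_mset F' (image_mset h (mset_set C))"
    by (simp add: multiset.map_comp comp_def)
  also have "image_mset h (mset_set C) = mset_set B"
    using assms(2) by (simp add: bij_betw_def image_mset_mset_set)
  finally show ?thesis .
qed

lemma count_image_mset_set: "finite A \<Longrightarrow> count (image_mset f (mset_set A)) v = card {x \<in> A. f x = v}"
proof (induction A rule: finite_induct)
  case (insert a A)
  have "{x \<in> insert a A. f x = v} = (if f a = v then insert a {x \<in> A. f x = v} else {x \<in> A. f x = v})"
    by auto
  with insert show ?case by auto
qed simp

(* qbin (m + 1) k is the Gaussian binomial coefficient [m + k choose k]_q as a multiset;
   qbin 0 k is the degenerate value needed to start the recursion. *)
fun qbin :: "nat \<Rightarrow> nat \<Rightarrow> nat multiset" where
  "qbin 0 k = (if k = 0 then {#0#} else {#})"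
| "qbin (Suc g) 0 = {#0#}"
| "qbin (Suc g) (Suc k) = qbin g (Suc k) + mshift g (qbin (Suc g) k)"

lemma qbin_zero [simp]: "qbin g 0 = {#0#}"
  by (cases g) auto

lemma qbin_one: "qbin (Suc 0) k = {#0#}"
  by (induction k) auto

lemma qbin_Suc_Suc':
  "qbin (Suc g) (Suc k) = qbin (Suc g) k + mshift (Suc k) (qbin g (Suc k))"
proof (induction g arbitrary: k)
  case 0
  then show ?case by (simp add: qbin_one)
next
  case (Suc g)
  note outer_IH = Suc.IH
  show ?case
  proof (induction k)
    case 0
    have "qbin (Suc (Suc g)) 1 = qbin (Suc g) 1 + {#Suc g#}"
      by (simp del: qbin.simps add: qbin.simps(3)[of "Suc g" 0])
    also have "qbin (Suc g) 1 = {#0#} + mshift 1 (qbin g 1)"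
      using outer_IH[of 0] by simp
    also have "{#0#} + mshift 1 (qbin g 1) + {#Suc g#} = {#0#} + mshift 1 (qbin g 1 + {#g#})"
      by simp
    also have "qbin g 1 + {#g#} = qbin (Suc g) 1"
      by (simp del: qbin.simps add: qbin.simps(3)[of g 0])
    finally show ?case by (simp del: qbin.simps)
  next
    case (Suc k)
    have "qbin (Suc (Suc g)) (Suc (Suc k))
        = qbin (Suc g) (Suc (Suc k)) + mshift (Suc g) (qbin (Suc (Suc g)) (Suc k))"
      by (rule qbin.simps(3))
    also have "\<dots> = qbin (Suc g) (Suc k) + mshift (Suc (Suc k)) (qbin g (Suc (Suc k)))
        + mshift (Suc g) (qbin (Suc (Suc g)) k + mshift (Suc k) (qbin (Suc g) (Suc k)))"
      by (simp only: outer_IH[of "Suc k"] Suc.IH)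
    also have "\<dots> = (qbin (Suc g) (Suc k) + mshift (Suc g) (qbin (Suc (Suc g)) k))
        + mshift (Suc (Suc k)) (qbin g (Suc (Suc k)) + mshift g (qbin (Suc g) (Suc k)))"
      by (simp add: add_ac)
    finally show ?case
      by (simp only: qbin.simps(3)[symmetric])
  qed
qed

(* The algebraic core of the recursion for pmaj below: the two ways a pattern can end
   recombine by one of the two Pascal recursions, provided the compatibility condition holds. *)
lemma qbin_merge:
  assumes "m = 0 \<or> ((a \<and> \<not> a' \<longrightarrow> c) \<and> (\<not> a \<and> a' \<longrightarrow> \<not> c))"
  shows "mshift (if a' then 0 else m + Suc k) (mshift (M + (if a then m else 0)) (qbin (Suc m) k))
       + mshift (if c then m + Suc k else 0) (mshift (M + (if a then 0 else Suc k)) (qbin m (Suc k)))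
       = mshift (M + (if c then m else 0) + (if a' then 0 else Suc k)) (qbin (Suc m) (Suc k))"
proof (cases "m = 0")
  case True
  then show ?thesis by (simp add: qbin_one)
next
  case False
  with assms have compat: "(a \<and> \<not> a' \<longrightarrow> c) \<and> (\<not> a \<and> a' \<longrightarrow> \<not> c)" by simp
  consider "a \<and> a' \<and> c \<or> \<not> a \<and> a' \<and> \<not> c \<or> \<not> a \<and> \<not> a' \<and> c"
    | "a \<and> a' \<and> \<not> c \<or> a \<and> \<not> a' \<and> c \<or> \<not> a \<and> \<not> a' \<and> \<not> c"
    using compat by blast
  then show ?thesis
  proof cases
    case 1
    then show ?thesis unfolding qbin_Suc_Suc' by (elim disjE conjE) (simp_all add: add_ac)
  next
    case 2
    then show ?thesis unfolding qbin.simps(3) by (elim disjE conjE) (simp_all add: add_ac)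
  qed
qed

section \<open>Binary words\<close>

(* Words over bool: a letter True marks a fixed point, a letter False a non-fixed point. *)
definition ntrue :: "bool list \<Rightarrow> nat" where
  "ntrue b = length (filter (\<lambda>x. x) b)"

definition nfalse :: "bool list \<Rightarrow> nat" where
  "nfalse b = length (filter Not b)"

lemma ntrue_nfalse: "ntrue b + nfalse b = length b"
  unfolding ntrue_def nfalse_def using sum_length_filter_compl[of "\<lambda>x. x" b] by simp

lemma ntrue_nfalse_simps [simp]:
  "ntrue [] = 0" "nfalse [] = 0"
  "ntrue (b @ [x]) = ntrue b + (if x then 1 else 0)"
  "nfalse (b @ [x]) = nfalse b + (if x then 0 else 1)"
  by (simp_all add: ntrue_def nfalse_def)

definition Words :: "nat \<Rightarrow> nat \<Rightarrow> bool list set" where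
  "Words m k = {b. nfalse b = m \<and> ntrue b = k}"

definition Wt :: "nat \<Rightarrow> nat \<Rightarrow> bool list set" where
  "Wt m k = {b \<in> Words m k. b \<noteq> [] \<and> last b}"

definition Wf :: "nat \<Rightarrow> nat \<Rightarrow> bool list set" where
  "Wf m k = {b \<in> Words m k. b = [] \<or> \<not> last b}"

lemma finite_Words: "finite (Words m k)"
proof (rule finite_subset)
  show "Words m k \<subseteq> {b. set b \<subseteq> UNIV \<and> length b = m + k}"
  proof
    fix b assume "b \<in> Words m k"
    then show "b \<in> {b. set b \<subseteq> UNIV \<and> length b = m + k}"
      using ntrue_nfalse[of b] by (simp add: Words_def)
  qed
qed (rule finite_lists_length_eq, simp)

lemma finite_Wt_Wf: "finite (Wt m k)" "finite (Wf m k)"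
  using finite_Words by (auto simp: Wt_def Wf_def)

lemma Words_split: "Words m k = Wt m k \<union> Wf m k" "Wt m k \<inter> Wf m k = {}"
  by (auto simp: Wt_def Wf_def)

lemma Wt_0: "Wt m 0 = {}"
proof -
  have pos: "0 < ntrue b" if "b \<noteq> []" "last b" for b
  proof -
    have "last b \<in> set b" using that(1) by (rule last_in_set)
    then have "filter (\<lambda>x. x) b \<noteq> []" using that(2) by (auto simp: filter_empty_conv)
    then show ?thesis by (simp add: ntrue_def)
  qed
  then show ?thesis using pos by (fastforce simp: Wt_def Words_def)
qed

lemma Wt_Suc: "Wt m (Suc k) = (\<lambda>b. b @ [True]) ` Words m k"
proof (intro equalityI subsetI)
  fix b assume b: "b \<in> Wt m (Suc k)"
  then have "b \<noteq> [] \<and> last b" by (simp add: Wt_def)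
  then obtain c where c: "b = c @ [True]" by (cases b rule: rev_cases) auto
  with b have "c \<in> Words m k" by (simp add: Wt_def Words_def)
  with c show "b \<in> (\<lambda>b. b @ [True]) ` Words m k" by blast
next
  fix b assume "b \<in> (\<lambda>b. b @ [True]) ` Words m k"
  then obtain c where "c \<in> Words m k" "b = c @ [True]" by blast
  then show "b \<in> Wt m (Suc k)" unfolding Wt_def Words_def by simp
qed

lemma Wf_0: "Wf 0 k = (if k = 0 then {[]} else {})"
proof -
  have pos: "0 < nfalse b" if "b \<noteq> []" "\<not> last b" for b
  proof -
    have "last b \<in> set b" using that(1) by (rule last_in_set)
    then have "filter Not b \<noteq> []" using that(2) by (auto simp: filter_empty_conv)
    then show ?thesis by (simp add: nfalse_def)
  qed
  then have "Wf 0 k \<subseteq> {[]}" using pos by (fastforce simp: Wf_def Words_def)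
  moreover have "[] \<in> Wf 0 k \<longleftrightarrow> k = 0" by (simp add: Wf_def Words_def)
  ultimately show ?thesis by (cases "k = 0") auto
qed

lemma Wf_Suc: "Wf (Suc m) k = (\<lambda>b. b @ [False]) ` Words m k"
proof (intro equalityI subsetI)
  fix b assume b: "b \<in> Wf (Suc m) k"
  then have "b \<noteq> [] \<and> \<not> last b" by (auto simp: Wf_def Words_def)
  then obtain c where c: "b = c @ [False]" by (cases b rule: rev_cases) auto
  with b have "c \<in> Words m k" by (simp add: Wf_def Words_def)
  with c show "b \<in> (\<lambda>b. b @ [False]) ` Words m k" by blast
next
  fix b assume "b \<in> (\<lambda>b. b @ [False]) ` Words m k"
  then obtain c where "c \<in> Words m k" "b = c @ [False]" by blast
  then show "b \<in> Wf (Suc m) k" unfolding Wf_def Words_def by simp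
qed

lemma image_mset_Words:
  "image_mset f (mset_set (Words m k))
     = image_mset f (mset_set (Wt m k)) + image_mset f (mset_set (Wf m k))"
  using Words_split by (simp add: mset_set_Union finite_Wt_Wf)

section \<open>Inversions of binary words\<close>

(* The number of pairs (False before True); it computes the correction term of maf. *)
definition winv :: "bool list \<Rightarrow> nat" where
  "winv b = (\<Sum>i<length b. if b ! i then nfalse (take i b) else 0)"

lemma winv_Nil [simp]: "winv [] = 0"
  by (simp add: winv_def)

lemma winv_snoc: "winv (b @ [x]) = winv b + (if x then nfalse b else 0)"
proof -
  have prefix: "(\<Sum>i<length b. if (b @ [x]) ! i then nfalse (take i (b @ [x])) else 0) = winv b"
    unfolding winv_def by (rule sum.cong) (auto simp: nth_append)
  have "winv (b @ [x])
      = (\<Sum>i<length b. if (b @ [x]) ! i then nfalse (take i (b @ [x])) else 0)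
        + (if x then nfalse b else 0)"
    by (simp add: winv_def)
  then show ?thesis by (simp only: prefix)
qed

lemma winv_Wf: "image_mset winv (mset_set (Wf (Suc m) k)) = image_mset winv (mset_set (Words m k))"
proof -
  have "image_mset (\<lambda>b. winv (b @ [False])) (mset_set (Words m k))
      = mshift 0 (image_mset winv (mset_set (Words m k)))"
    by (rule image_mset_shift[OF finite_Words]) (simp add: winv_snoc)
  then show ?thesis unfolding Wf_Suc image_mset_snoc by simp
qed

lemma winv_Wt:
  "image_mset winv (mset_set (Wt m (Suc k))) = mshift m (image_mset winv (mset_set (Words m k)))"
  unfolding Wt_Suc image_mset_snoc
  by (rule image_mset_shift[OF finite_Words]) (simp add: winv_snoc Words_def)

lemma winv_distribution: "image_mset winv (mset_set (Words m k)) = qbin (Suc m) k"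
proof (induction k arbitrary: m)
  case 0
  show ?case
  proof (induction m)
    case 0
    show ?case by (simp add: image_mset_Words Wt_0 Wf_0)
  next
    case (Suc m)
    then show ?case by (simp add: image_mset_Words[of _ "Suc m" 0] Wt_0 winv_Wf)
  qed
next
  case (Suc k)
  note outer_IH = Suc.IH
  show ?case
  proof (induction m)
    case 0
    have "image_mset winv (mset_set (Wt 0 (Suc k))) = {#0#}"
      using winv_Wt[of 0 k] outer_IH[of 0] by (simp add: qbin_one)
    then show ?case by (simp add: image_mset_Words Wf_0 qbin_one)
  next
    case (Suc m)
    have "image_mset winv (mset_set (Words (Suc m) (Suc k)))
        = mshift (Suc m) (image_mset winv (mset_set (Words (Suc m) k)))
          + image_mset winv (mset_set (Words m (Suc k)))"
      by (simp only: image_mset_Words[of _ "Suc m" "Suc k"] winv_Wt winv_Wf)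
    then show ?case using outer_IH[of "Suc m"] Suc.IH by (simp add: add_ac)
  qed
qed

(* The positions (1-based) of the letters True, and the correction term of maf written
   in terms of a set of fixed points; the two descriptions of the term agree. *)
definition trueset :: "bool list \<Rightarrow> nat set" where
  "trueset b = {i \<in> {1..length b}. b ! (i - 1)}"

definition fixsum :: "nat set \<Rightarrow> nat" where
  "fixsum S = (let L = sorted_list_of_set S in \<Sum>j<length L. L ! j - (j + 1))"

lemma finite_trueset: "finite (trueset b)"
  by (simp add: trueset_def)

lemma card_trueset: "card (trueset b) = ntrue b"
proof -
  have "trueset b = Suc ` {i. i < length b \<and> b ! i}"
    by (force simp: trueset_def image_iff Suc_le_eq gr0_conv_Suc)
  then have "card (trueset b) = card {i. i < length b \<and> b ! i}"
    by (simp add: card_image)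
  then show ?thesis by (simp add: ntrue_def length_filter_conv_card)
qed

lemma trueset_snoc: "trueset (b @ [x]) = (if x then insert (Suc (length b)) (trueset b) else trueset b)"
  unfolding trueset_def by (auto simp: nth_append le_Suc_eq)

lemma fixsum_trueset_snoc: "fixsum (trueset (b @ [x])) = fixsum (trueset b) + (if x then nfalse b else 0)"
proof (cases x)
  case False
  then show ?thesis by (simp add: trueset_snoc)
next
  case True
  define L where "L = sorted_list_of_set (trueset b)"
  have new: "Suc (length b) \<notin> trueset b" by (simp add: trueset_def)
  have bound: "\<forall>y\<in>set L. y \<le> Suc (length b)" by (auto simp: L_def finite_trueset trueset_def)
  have "sorted_list_of_set (trueset (b @ [x])) = L @ [Suc (length b)]"
    using True bound by (simp add: trueset_snoc sorted_list_of_set_insert[OF finite_trueset new]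
        L_def sorted_insort_is_snoc)
  then have "fixsum (trueset (b @ [x]))
      = (\<Sum>j<length L. L ! j - (j + 1)) + (Suc (length b) - (length L + 1))"
    by (simp add: fixsum_def nth_append)
  also have "length L = ntrue b" by (simp add: L_def card_trueset[symmetric] finite_trueset)
  also have "Suc (length b) - (ntrue b + 1) = nfalse b" using ntrue_nfalse[of b] by simp
  finally show ?thesis using True by (simp add: fixsum_def L_def card_trueset)
qed

lemma fixsum_trueset: "fixsum (trueset b) = winv b"
proof (induction b rule: rev_induct)
  case Nil
  then show ?case by (simp add: fixsum_def trueset_def)
next
  case (snoc x b)
  then show ?case by (simp add: fixsum_trueset_snoc winv_snoc)
qed

section \<open>Positions of the letters False\<close>

lemma length_filter_nth: "length (filter P xs) = length (filter (\<lambda>i. P (xs ! i)) [0..<length xs])"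
proof -
  have "{i. i < length [0..<length xs] \<and> P (xs ! ([0..<length xs] ! i))} = {i. i < length xs \<and> P (xs ! i)}"
    by auto
  then show ?thesis by (simp only: length_filter_conv_card)
qed

lemma card_le_nth_sorted:
  fixes xs :: "nat list"
  assumes "sorted_wrt (<) xs" "t < length xs"
  shows "card {x \<in> set xs. x \<le> xs ! t} = Suc t"
proof -
  have less: "xs ! i < xs ! j \<longleftrightarrow> i < j" if "i < length xs" "j < length xs" for i j
    using assms(1) that by (metis not_less_iff_gr_or_eq sorted_wrt_iff_nth_less)
  have "{x \<in> set xs. x \<le> xs ! t} = (\<lambda>j. xs ! j) ` {..t}"
  proof (intro equalityI subsetI)
    fix x assume "x \<in> {x \<in> set xs. x \<le> xs ! t}"
    then obtain j where "j < length xs" "x = xs ! j" "xs ! j \<le> xs ! t"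
      by (auto simp: in_set_conv_nth)
    with less[of t j] assms(2) show "x \<in> (\<lambda>j. xs ! j) ` {..t}" by (auto simp: not_less[symmetric])
  next
    fix x assume "x \<in> (\<lambda>j. xs ! j) ` {..t}"
    then obtain j where "j \<le> t" "x = xs ! j" by auto
    with less[of j t] assms(2) show "x \<in> {x \<in> set xs. x \<le> xs ! t}" by (auto simp: le_less)
  qed
  moreover have "inj_on (\<lambda>j. xs ! j) {..t}"
  proof (rule inj_onI)
    fix i j assume "i \<in> {..t}" "j \<in> {..t}" "xs ! i = xs ! j"
    with less[of i j] less[of j i] assms(2) show "i = j"
      by (cases i j rule: linorder_cases) auto
  qed
  ultimately show ?thesis by (simp add: card_image)
qed

definition falsepos :: "bool list \<Rightarrow> nat list" where
  "falsepos b = filter (\<lambda>i. \<not> b ! i) [0..<length b]"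

definition frank :: "bool list \<Rightarrow> nat \<Rightarrow> nat" where
  "frank b i = length (filter (\<lambda>j. \<not> b ! j) [0..<i])"

lemma length_falsepos: "length (falsepos b) = nfalse b"
  unfolding falsepos_def nfalse_def by (subst length_filter_nth) simp

lemma set_falsepos: "set (falsepos b) = {i. i < length b \<and> \<not> b ! i}"
  by (auto simp: falsepos_def)

lemma distinct_falsepos: "distinct (falsepos b)"
  by (simp add: falsepos_def)

lemma sorted_falsepos: "sorted_wrt (<) (falsepos b)"
  unfolding falsepos_def by (rule sorted_wrt_filter) simp

lemma falsepos_split:
  assumes "i < length b" "\<not> b ! i"
  shows "falsepos b = filter (\<lambda>j. \<not> b ! j) [0..<i] @ i # filter (\<lambda>j. \<not> b ! j) [Suc i..<length b]"
proof -
  have "[0..<length b] = [0..<i] @ i # [Suc i..<length b]"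
    using assms(1) upt_add_eq_append[of 0 i "length b - i"] upt_conv_Cons[of i "length b"] by simp
  then show ?thesis using assms(2) by (simp add: falsepos_def)
qed

lemma falsepos_frank:
  assumes "i < length b" "\<not> b ! i"
  shows "frank b i < length (falsepos b)" "falsepos b ! frank b i = i"
  using falsepos_split[OF assms] by (simp_all add: frank_def nth_append)

lemma frank_falsepos:
  assumes "t < length (falsepos b)"
  shows "frank b (falsepos b ! t) = t"
proof -
  have "falsepos b ! t \<in> set (falsepos b)" using assms by (rule nth_mem)
  then have i: "falsepos b ! t < length b" "\<not> b ! (falsepos b ! t)" by (auto simp: set_falsepos)
  show ?thesis
    using falsepos_frank[OF i] assms distinct_falsepos nth_eq_iff_index_eq by blast
qed

lemma frank_Suc: "frank b (Suc i) = frank b i + (if b ! i then 0 else 1)"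
  by (simp add: frank_def)

lemma frank_snoc: "i \<le> length b \<Longrightarrow> frank (b @ [x]) i = frank b i"
  unfolding frank_def by (rule arg_cong[where f = length], rule filter_cong) (auto simp: nth_append)

lemma frank_length: "frank b (length b) = nfalse b"
  using length_falsepos by (simp add: frank_def falsepos_def)

lemma bij_frank: "bij_betw (frank b) (set (falsepos b)) {..<nfalse b}"
proof (rule bij_betw_byWitness[where f' = "\<lambda>t. falsepos b ! t"])
  show "\<forall>i\<in>set (falsepos b). falsepos b ! frank b i = i"
    by (auto simp: set_falsepos falsepos_frank)
  show "\<forall>t\<in>{..<nfalse b}. frank b (falsepos b ! t) = t"
    by (simp add: frank_falsepos length_falsepos)
  show "frank b ` set (falsepos b) \<subseteq> {..<nfalse b}"
    using falsepos_frank(1) by (auto simp: set_falsepos length_falsepos[symmetric])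
  show "(\<lambda>t. falsepos b ! t) ` {..<nfalse b} \<subseteq> set (falsepos b)"
    by (auto simp: length_falsepos[symmetric])
qed

section \<open>The major index after inserting fixed points\<close>

(* Let e t and D t say that the t-th letter of a derangement d is an excedance and that d has
   a descent at t.  Inserting fixed points into d according to a pattern b, the pair of
   letters at positions i - 1 and i (0-based) forms a descent exactly when desc_pat e D b i:
   two fixed points never do, a fixed point followed by a letter of d does unless that letter
   is an excedance, a letter of d followed by a fixed point does iff it is an excedance, and
   two letters of d do iff they form a descent of d.  pmaj is the resulting major index. *)
definition desc_pat :: "(nat \<Rightarrow> bool) \<Rightarrow> (nat \<Rightarrow> bool) \<Rightarrow> bool list \<Rightarrow> nat \<Rightarrow> bool" where
  "desc_pat e D b i =
     (if b ! (i - 1) then (if b ! i then False else \<not> e (frank b (Suc i)))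
      else (if b ! i then e (frank b i) else D (frank b i)))"

definition pmaj :: "(nat \<Rightarrow> bool) \<Rightarrow> (nat \<Rightarrow> bool) \<Rightarrow> bool list \<Rightarrow> nat" where
  "pmaj e D b = (\<Sum>i\<in>{1..<length b}. if desc_pat e D b i then i else 0)"

definition majD :: "(nat \<Rightarrow> bool) \<Rightarrow> nat \<Rightarrow> nat" where
  "majD D m = (\<Sum>t\<in>{1..<m}. if D t then t else 0)"

(* The condition satisfied by the excedances and descents of a derangement. *)
definition compatible :: "(nat \<Rightarrow> bool) \<Rightarrow> (nat \<Rightarrow> bool) \<Rightarrow> nat \<Rightarrow> bool" where
  "compatible e D m \<longleftrightarrow>
     (\<forall>t. 1 \<le> t \<longrightarrow> t < m \<longrightarrow> (e t \<and> \<not> e (Suc t) \<longrightarrow> D t) \<and> (\<not> e t \<and> e (Suc t) \<longrightarrow> \<not> D t))"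

lemma majD_Suc: "majD D (Suc m) = majD D m + (if D m then m else 0)"
  by (cases m) (auto simp: majD_def)

lemma majD_0 [simp]: "majD D 0 = 0"
  by (simp add: majD_def)

lemma desc_pat_snoc:
  assumes "i < length b"
  shows "desc_pat e D (b @ [x]) i = desc_pat e D b i"
proof -
  have "i - 1 < length b" "i \<le> length b" "Suc i \<le> length b" using assms by auto
  then show ?thesis by (simp add: desc_pat_def nth_append frank_snoc)
qed

lemma desc_pat_last:
  assumes "b \<noteq> []"
  shows "desc_pat e D (b @ [x]) (length b) =
     (if last b then (if x then False else \<not> e (Suc (nfalse b)))
      else (if x then e (nfalse b) else D (nfalse b)))"
proof -
  have prev: "(b @ [y]) ! (length b - Suc 0) = last b" for y
    using assms by (simp add: nth_append last_conv_nth)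
  have rank: "frank (b @ [y]) (length b) = nfalse b" for y
    by (simp add: frank_snoc frank_length)
  show ?thesis by (simp add: desc_pat_def frank_Suc prev rank)
qed

lemma pmaj_short [simp]: "pmaj e D [] = 0" "pmaj e D [x] = 0"
  by (simp_all add: pmaj_def)

lemma pmaj_snoc:
  "pmaj e D (b @ [x]) = pmaj e D b +
     (if b \<noteq> [] \<and> desc_pat e D (b @ [x]) (length b) then length b else 0)"
proof (cases "b = []")
  case True
  then show ?thesis by (simp add: pmaj_def)
next
  case False
  then have "{1..<length (b @ [x])} = insert (length b) {1..<length b}"
    by (cases b) auto
  then have "pmaj e D (b @ [x]) = (if desc_pat e D (b @ [x]) (length b) then length b else 0)
      + (\<Sum>i\<in>{1..<length b}. if desc_pat e D (b @ [x]) i then i else 0)"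
    by (simp add: pmaj_def)
  moreover have "(\<Sum>i\<in>{1..<length b}. if desc_pat e D (b @ [x]) i then i else 0) = pmaj e D b"
    unfolding pmaj_def by (rule sum.cong) (auto simp: desc_pat_snoc)
  ultimately show ?thesis using False by simp
qed

lemma pmaj_snoc_True:
  "b \<in> Words m k \<Longrightarrow>
   pmaj e D (b @ [True]) = pmaj e D b + (if b \<noteq> [] \<and> \<not> last b \<and> e m then m + k else 0)"
  using ntrue_nfalse[of b] by (auto simp: pmaj_snoc desc_pat_last Words_def split: if_splits)

lemma pmaj_snoc_False:
  "b \<in> Words m k \<Longrightarrow>
   pmaj e D (b @ [False]) = pmaj e D b +
     (if b = [] then 0 else if last b then (if e (Suc m) then 0 else m + k)
      else (if D m then m + k else 0))"
  using ntrue_nfalse[of b] by (auto simp: pmaj_snoc desc_pat_last Words_def split: if_splits)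

definition pdist :: "(nat \<Rightarrow> bool) \<Rightarrow> (nat \<Rightarrow> bool) \<Rightarrow> bool list set \<Rightarrow> nat multiset" where
  "pdist e D A = image_mset (pmaj e D) (mset_set A)"

lemma pdist_Wt_Suc:
  "pdist e D (Wt m (Suc k)) = pdist e D (Wt m k) + mshift (if e m then m + k else 0) (pdist e D (Wf m k))"
proof -
  have "pdist e D (Wt m (Suc k))
      = image_mset (\<lambda>b. pmaj e D (b @ [True])) (mset_set (Wt m k))
        + image_mset (\<lambda>b. pmaj e D (b @ [True])) (mset_set (Wf m k))"
    unfolding pdist_def Wt_Suc image_mset_snoc by (rule image_mset_Words)
  also have "image_mset (\<lambda>b. pmaj e D (b @ [True])) (mset_set (Wt m k)) = mshift 0 (pdist e D (Wt m k))"
    unfolding pdist_def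
    by (rule image_mset_shift[OF finite_Wt_Wf(1)]) (auto simp: Wt_def pmaj_snoc_True)
  also have "image_mset (\<lambda>b. pmaj e D (b @ [True])) (mset_set (Wf m k))
      = mshift (if e m then m + k else 0) (pdist e D (Wf m k))"
    unfolding pdist_def
  proof (rule image_mset_shift[OF finite_Wt_Wf(2)])
    fix b assume b: "b \<in> Wf m k"
    then have "b = [] \<Longrightarrow> m + k = 0" by (auto simp: Wf_def Words_def)
    with b show "pmaj e D (b @ [True]) = (if e m then m + k else 0) + pmaj e D b"
      by (auto simp: Wf_def pmaj_snoc_True)
  qed
  finally show ?thesis by simp
qed

lemma pdist_Wf_Suc:
  "pdist e D (Wf (Suc m) k)
     = mshift (if e (Suc m) then 0 else m + k) (pdist e D (Wt m k))
       + mshift (if D m then m + k else 0) (pdist e D (Wf m k))"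
proof -
  have "pdist e D (Wf (Suc m) k)
      = image_mset (\<lambda>b. pmaj e D (b @ [False])) (mset_set (Wt m k))
        + image_mset (\<lambda>b. pmaj e D (b @ [False])) (mset_set (Wf m k))"
    unfolding pdist_def Wf_Suc image_mset_snoc by (rule image_mset_Words)
  also have "image_mset (\<lambda>b. pmaj e D (b @ [False])) (mset_set (Wt m k))
      = mshift (if e (Suc m) then 0 else m + k) (pdist e D (Wt m k))"
    unfolding pdist_def
    by (rule image_mset_shift[OF finite_Wt_Wf(1)]) (auto simp: Wt_def pmaj_snoc_False)
  also have "image_mset (\<lambda>b. pmaj e D (b @ [False])) (mset_set (Wf m k))
      = mshift (if D m then m + k else 0) (pdist e D (Wf m k))"
    unfolding pdist_def
  proof (rule image_mset_shift[OF finite_Wt_Wf(2)])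
    fix b assume b: "b \<in> Wf m k"
    then have "b = [] \<Longrightarrow> m + k = 0" by (auto simp: Wf_def Words_def)
    with b show "pmaj e D (b @ [False]) = (if D m then m + k else 0) + pmaj e D b"
      by (auto simp: Wf_def pmaj_snoc_False)
  qed
  finally show ?thesis .
qed

lemma pdist_Wt_from_Wf:
  assumes Wf: "\<And>k. pdist e D (Wf m k) = mshift (majD D m + (if e m then 0 else k)) (qbin m k)"
  shows "pdist e D (Wt m k) =
     (if k = 0 then {#} else mshift (majD D m + (if e m then m else 0)) (qbin (Suc m) (k - 1)))"
proof (induction k)
  case 0
  show ?case by (simp add: pdist_def Wt_0)
next
  case (Suc k)
  show ?case
  proof (cases k)
    case 0
    with Suc.IH Wf[of 0] show ?thesis by (cases "e m") (simp_all add: pdist_Wt_Suc add_ac)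
  next
    case (Suc k')
    with Suc.IH Wf[of k] show ?thesis
      by (cases "e m") (simp_all del: qbin.simps add: pdist_Wt_Suc qbin_Suc_Suc' add_ac)
  qed
qed

lemma pdist_Wf:
  assumes "compatible e D M" and "m \<le> M"
  shows "pdist e D (Wf m k) = mshift (majD D m + (if e m then 0 else k)) (qbin m k)"
  using assms(2)
proof (induction m arbitrary: k)
  case 0
  show ?case by (simp add: pdist_def Wf_0)
next
  case (Suc m)
  have Wf: "pdist e D (Wf m k) = mshift (majD D m + (if e m then 0 else k)) (qbin m k)" for k
    using Suc by simp
  note Wt = pdist_Wt_from_Wf[OF Wf]
  show ?case
  proof (cases k)
    case 0
    with Wt[of 0] Wf[of 0] show ?thesis by (simp add: pdist_Wf_Suc majD_Suc add_ac)
  next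
    case (Suc k')
    have compat: "m = 0 \<or> ((e m \<and> \<not> e (Suc m) \<longrightarrow> D m) \<and> (\<not> e m \<and> e (Suc m) \<longrightarrow> \<not> D m))"
      using assms(1) \<open>Suc m \<le> M\<close> by (auto simp: compatible_def)
    have Wt': "pdist e D (Wt m (Suc k')) = mshift (majD D m + (if e m then m else 0)) (qbin (Suc m) k')"
      using Wt[of "Suc k'"] by simp
    have "pdist e D (Wf (Suc m) (Suc k'))
        = mshift (if e (Suc m) then 0 else m + Suc k') (mshift (majD D m + (if e m then m else 0)) (qbin (Suc m) k'))
          + mshift (if D m then m + Suc k' else 0) (mshift (majD D m + (if e m then 0 else Suc k')) (qbin m (Suc k')))"
      by (simp only: pdist_Wf_Suc Wt' Wf)
    also have "\<dots> = mshift (majD D m + (if D m then m else 0) + (if e (Suc m) then 0 else Suc k'))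
                        (qbin (Suc m) (Suc k'))"
      by (rule qbin_merge[OF compat])
    finally show ?thesis by (simp only: Suc majD_Suc)
  qed
qed

lemma pmaj_distribution:
  assumes "compatible e D m"
  shows "pdist e D (Words m k) = mshift (majD D m) (qbin (Suc m) k)"
proof -
  have Wf: "pdist e D (Wf m k) = mshift (majD D m + (if e m then 0 else k)) (qbin m k)" for k
    using pdist_Wf[OF assms] by simp
  note Wt = pdist_Wt_from_Wf[OF Wf]
  have "pdist e D (Words m k) = pdist e D (Wt m k) + pdist e D (Wf m k)"
    unfolding pdist_def by (rule image_mset_Words)
  also have "\<dots> = mshift (majD D m) (qbin (Suc m) k)"
  proof (cases k)
    case 0
    then show ?thesis using Wt Wf by simp
  next
    case (Suc k')
    show ?thesis
    proof (cases "e m")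
      case True
      with Wt[of k] Wf[of k] Suc show ?thesis by (simp add: add_ac)
    next
      case False
      with Wt[of k] Wf[of k] Suc show ?thesis
        by (simp del: qbin.simps add: qbin_Suc_Suc' add_ac)
    qed
  qed
  finally show ?thesis .
qed

section \<open>Colored permutations: fixed-point pattern and derangement part\<close>

lemma G_len: "s \<in> G l n \<Longrightarrow> length s = n"
  by (simp add: G_def)

lemma G_fst: "s \<in> G l n \<Longrightarrow> i < n \<Longrightarrow> fst (s ! i) < l"
  unfolding G_def by auto

lemma G_bij: "s \<in> G l n \<Longrightarrow> bij_betw (\<lambda>i. snd (s ! i)) {..<n} {1..n}"
proof -
  assume s: "s \<in> G l n"
  then have inj: "inj_on (\<lambda>i. snd (s ! i)) {..<n}"
    by (auto simp: G_def distinct_conv_nth inj_on_def)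
  have len: "length s = n" using s by (simp add: G_def)
  have "(\<lambda>i. snd (s ! i)) ` {..<n} = snd ` set s"
    using len by (auto simp: set_conv_nth)
  also have "\<dots> = {1..n}" using s unfolding G_def by auto
  finally show ?thesis using inj by (simp add: bij_betw_def)
qed

lemma G_snd_inj: "s \<in> G l n \<Longrightarrow> i < n \<Longrightarrow> j < n \<Longrightarrow> snd (s ! i) = snd (s ! j) \<Longrightarrow> i = j"
  using G_bij by (fastforce simp: bij_betw_def inj_on_def)

lemma finite_G: "finite (G l n)"
proof (rule finite_subset)
  show "G l n \<subseteq> {xs. set xs \<subseteq> {..<l} \<times> {1..n} \<and> length xs = n}"
  proof
    fix s assume s: "s \<in> G l n"
    have "x \<in> {..<l} \<times> {1..n}" if x: "x \<in> set s" for x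
    proof -
      have "snd x \<in> set (map snd s)" using x by simp
      with s x show ?thesis by (cases x) (auto simp: G_def)
    qed
    with s show "s \<in> {xs. set xs \<subseteq> {..<l} \<times> {1..n} \<and> length xs = n}"
      by (auto simp: G_def)
  qed
qed (rule finite_lists_length_eq, simp)

(* The fixed-point pattern of s (0-based: position i is fixed iff s ! i = (0, i + 1)),
   the list NF of non-fixed positions, their values VS, and the rank function used by Der. *)
definition fb :: "(nat \<times> nat) list \<Rightarrow> bool list" where
  "fb s = map (\<lambda>i. s ! i = (0, Suc i)) [0..<length s]"

definition NF :: "(nat \<times> nat) list \<Rightarrow> nat list" where
  "NF s = falsepos (fb s)"

definition VS :: "(nat \<times> nat) list \<Rightarrow> nat set" where
  "VS s = (\<lambda>i. snd (s ! i)) ` set (NF s)"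

definition rk :: "(nat \<times> nat) list \<Rightarrow> nat \<Rightarrow> nat" where
  "rk s v = card {a \<in> VS s. a \<le> v}"

lemma length_fb [simp]: "length (fb s) = length s"
  by (simp add: fb_def)

lemma fb_nth: "i < length s \<Longrightarrow> fb s ! i \<longleftrightarrow> s ! i = (0, Suc i)"
  by (simp add: fb_def)

lemma NF_filter: "NF s = filter (\<lambda>i. s ! i \<noteq> (0, Suc i)) [0..<length s]"
  unfolding NF_def falsepos_def by (rule filter_cong) (simp_all add: fb_nth)

lemma set_NF: "set (NF s) = {i. i < length s \<and> s ! i \<noteq> (0, Suc i)}"
  by (auto simp: NF_filter)

lemma length_NF: "length (NF s) = nfalse (fb s)"
  by (simp add: NF_def length_falsepos)

lemma Der_alt: "Der s = map (\<lambda>i. (fst (s ! i), rk s (snd (s ! i)))) (NF s)"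
proof -
  have zip: "zip [1..<length s + 1] s = map (\<lambda>i. (Suc i, s ! i)) [0..<length s]"
    by (rule nth_equalityI) (simp_all del: upt_Suc)
  have nonfixed: "filter (\<lambda>(i, x). x \<noteq> (0, i)) (zip [1..<length s + 1] s) = map (\<lambda>i. (Suc i, s ! i)) (NF s)"
    unfolding zip NF_filter filter_map by (simp add: comp_def)
  have "snd ` set (map snd (map (\<lambda>i. (Suc i, s ! i)) (NF s))) = VS s"
    by (auto simp: VS_def image_image)
  then show ?thesis
    unfolding Der_def Let_def nonfixed rk_def by (simp add: comp_def case_prod_beta)
qed

lemma length_Der: "length (Der s) = nfalse (fb s)"
  by (simp add: Der_alt length_NF)

lemma Der_nth: "t < length (NF s) \<Longrightarrow> Der s ! t = (fst (s ! (NF s ! t)), rk s (snd (s ! (NF s ! t))))"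
  by (simp add: Der_alt)

(* The values at non-fixed positions are exactly the non-fixed positions (shifted to
   1-based): the value map is a bijection fixing the fixed points. *)
lemma VS_eq:
  assumes s: "s \<in> G l n"
  shows "VS s = Suc ` set (NF s)"
proof -
  define f where "f = (\<lambda>i. snd (s ! i))"
  define F where "F = {i. i < n \<and> s ! i = (0, Suc i)}"
  have bij: "bij_betw f {..<n} {1..n}" using G_bij[OF s] by (simp add: f_def)
  have NF: "set (NF s) = {..<n} - F" using G_len[OF s] by (auto simp: set_NF F_def)
  have "f ` F = Suc ` F" by (force simp: F_def f_def)
  have "VS s = f ` ({..<n} - F)" by (simp add: VS_def NF f_def)
  also have "\<dots> = f ` {..<n} - f ` F"
    by (rule inj_on_image_set_diff[OF bij_betw_imp_inj_on[OF bij]]) (auto simp: F_def)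
  also have "\<dots> = {1..n} - f ` F" using bij_betw_imp_surj_on[OF bij] by simp
  also have "\<dots> = {1..n} - Suc ` F" using \<open>f ` F = Suc ` F\<close> by simp
  also have "\<dots> = Suc ` {..<n} - Suc ` F" by (simp add: image_Suc_lessThan)
  also have "\<dots> = Suc ` ({..<n} - F)" by (rule image_set_diff[symmetric]) simp
  finally show ?thesis by (simp add: NF)
qed

lemma rk_mono:
  assumes "v \<in> VS s" "w \<in> VS s" "v < w"
  shows "rk s v < rk s w"
proof -
  have "{a \<in> VS s. a \<le> v} \<subseteq> {a \<in> VS s. a \<le> w}"
    "w \<in> {a \<in> VS s. a \<le> w}" "w \<notin> {a \<in> VS s. a \<le> v}"
    using assms by auto
  then have "{a \<in> VS s. a \<le> v} \<subset> {a \<in> VS s. a \<le> w}" by blast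
  then show ?thesis unfolding rk_def by (rule psubset_card_mono[rotated]) (simp add: VS_def)
qed

lemma rk_less_iff: "v \<in> VS s \<Longrightarrow> w \<in> VS s \<Longrightarrow> rk s v < rk s w \<longleftrightarrow> v < w"
  by (metis less_asym linorder_neqE_nat rk_mono)

lemma rk_inj: "v \<in> VS s \<Longrightarrow> w \<in> VS s \<Longrightarrow> rk s v = rk s w \<Longrightarrow> v = w"
  by (metis less_irrefl linorder_neqE_nat rk_mono)

lemma rk_Suc_NF:
  assumes s: "s \<in> G l n" and t: "t < length (NF s)"
  shows "rk s (Suc (NF s ! t)) = Suc t"
proof -
  have "{a \<in> VS s. a \<le> Suc (NF s ! t)} = Suc ` {x \<in> set (NF s). x \<le> NF s ! t}"
    unfolding VS_eq[OF s] by auto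
  then have "rk s (Suc (NF s ! t)) = card {x \<in> set (NF s). x \<le> NF s ! t}"
    unfolding rk_def by (simp add: card_image)
  also have "\<dots> = Suc t"
    using card_le_nth_sorted[OF _ t] sorted_falsepos by (simp add: NF_def)
  finally show ?thesis .
qed

lemma nonfixed_entry:
  assumes s: "s \<in> G l n" and j: "j < n" "s ! j \<noteq> (0, Suc j)"
  shows "frank (fb s) j < length (NF s)" "NF s ! frank (fb s) j = j"
    and "Der s ! frank (fb s) j = (fst (s ! j), rk s (snd (s ! j)))"
    and "rk s (Suc j) = Suc (frank (fb s) j)"
    and "snd (s ! j) \<in> VS s" "Suc j \<in> VS s"
proof -
  have len: "length s = n" using s by (rule G_len)
  have "j < length (fb s)" "\<not> fb s ! j" using j len by (simp_all add: fb_nth)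
  note pos = falsepos_frank[OF this, folded NF_def]
  show "frank (fb s) j < length (NF s)" "NF s ! frank (fb s) j = j" by (fact pos)+
  show "Der s ! frank (fb s) j = (fst (s ! j), rk s (snd (s ! j)))"
    using Der_nth[OF pos(1)] pos(2) by simp
  show "rk s (Suc j) = Suc (frank (fb s) j)"
    using rk_Suc_NF[OF s pos(1)] pos(2) by simp
  have "j \<in> set (NF s)" using j len by (simp add: set_NF)
  then show "snd (s ! j) \<in> VS s" "Suc j \<in> VS s"
    by (simp add: VS_def, simp add: VS_eq[OF s])
qed

section \<open>The statistics in terms of the encoding\<close>

definition exc_at :: "(nat \<times> nat) list \<Rightarrow> nat \<Rightarrow> bool" where
  "exc_at d t \<longleftrightarrow> fst (d ! (t - 1)) = 0 \<and> t < snd (d ! (t - 1))"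

definition des_at :: "(nat \<times> nat) list \<Rightarrow> nat \<Rightarrow> bool" where
  "des_at d t \<longleftrightarrow> cless (d ! t) (d ! (t - 1))"

lemma majD_des_at: "majD (des_at d) (length d) = maj d"
  by (simp add: majD_def maj_def des_at_def)

lemma cless_rk:
  assumes "v \<in> VS s" "w \<in> VS s"
  shows "cless (c, rk s v) (c', rk s w) \<longleftrightarrow> cless (c, v) (c', w)"
  using rk_less_iff[OF assms] by (simp add: cless_def)

(* Comparisons with a fixed
   point are decided by comparing ranks, since the fixed point j + 1 sits between the values
   at non-fixed positions exactly as its neighbour Suc j + 1 or j + 1 does. *)
lemma descent_fixed_nonfixed:
  assumes s: "s \<in> G l n" and j: "Suc j < n"
    and fixed: "s ! j = (0, Suc j)" and nf: "s ! Suc j \<noteq> (0, Suc (Suc j))"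
  shows "cless (s ! Suc j) (s ! j) \<longleftrightarrow> \<not> exc_at (Der s) (Suc (frank (fb s) (Suc j)))"
proof -
  note E = nonfixed_entry[OF s j nf]
  obtain c v where cv: "s ! Suc j = (c, v)" by fastforce
  have "v \<noteq> Suc j" using G_snd_inj[OF s _ j, of j] j fixed cv by auto
  have "exc_at (Der s) (Suc (frank (fb s) (Suc j))) \<longleftrightarrow> c = 0 \<and> rk s (Suc (Suc j)) < rk s v"
    using E(3,4) cv by (simp add: exc_at_def)
  also have "\<dots> \<longleftrightarrow> c = 0 \<and> Suc (Suc j) < v"
    using rk_less_iff[OF E(6), of v] E(5) cv by simp
  finally show ?thesis using fixed nf cv \<open>v \<noteq> Suc j\<close> by (auto simp: cless_def)
qed

lemma descent_nonfixed_fixed: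
  assumes s: "s \<in> G l n" and j: "Suc j < n"
    and nf: "s ! j \<noteq> (0, Suc j)" and fixed: "s ! Suc j = (0, Suc (Suc j))"
  shows "cless (s ! Suc j) (s ! j) \<longleftrightarrow> exc_at (Der s) (Suc (frank (fb s) j))"
proof -
  have jn: "j < n" using j by simp
  note E = nonfixed_entry[OF s jn nf]
  obtain c v where cv: "s ! j = (c, v)" by fastforce
  have "v \<noteq> Suc (Suc j)" using G_snd_inj[OF s jn j] fixed cv by auto
  have "exc_at (Der s) (Suc (frank (fb s) j)) \<longleftrightarrow> c = 0 \<and> rk s (Suc j) < rk s v"
    using E(3,4) cv by (simp add: exc_at_def)
  also have "\<dots> \<longleftrightarrow> c = 0 \<and> Suc j < v"
    using rk_less_iff[OF E(6), of v] E(5) cv by simp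
  finally show ?thesis using fixed cv \<open>v \<noteq> Suc (Suc j)\<close> by (auto simp: cless_def)
qed

lemma descent_nonfixed_nonfixed:
  assumes s: "s \<in> G l n" and j: "Suc j < n"
    and nf: "s ! j \<noteq> (0, Suc j)" and nf': "s ! Suc j \<noteq> (0, Suc (Suc j))"
  shows "cless (s ! Suc j) (s ! j) \<longleftrightarrow> des_at (Der s) (Suc (frank (fb s) j))"
proof -
  have jn: "j < n" using j by simp
  note E = nonfixed_entry[OF s jn nf] and E' = nonfixed_entry[OF s j nf']
  have "frank (fb s) (Suc j) = Suc (frank (fb s) j)"
    using nf jn G_len[OF s] by (simp add: frank_Suc fb_nth)
  then have "des_at (Der s) (Suc (frank (fb s) j))
      \<longleftrightarrow> cless (fst (s ! Suc j), rk s (snd (s ! Suc j))) (fst (s ! j), rk s (snd (s ! j)))"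
    using E(3) E'(3) by (simp add: des_at_def)
  also have "\<dots> \<longleftrightarrow> cless (s ! Suc j) (s ! j)"
    using cless_rk[OF E'(5) E(5)] by simp
  finally show ?thesis ..
qed

lemma descent_via_pattern:
  assumes s: "s \<in> G l n" and j: "Suc j < n"
  shows "cless (s ! Suc j) (s ! j) \<longleftrightarrow> desc_pat (exc_at (Der s)) (des_at (Der s)) (fb s) (Suc j)"
proof -
  have fb: "fb s ! j \<longleftrightarrow> s ! j = (0, Suc j)" "fb s ! Suc j \<longleftrightarrow> s ! Suc j = (0, Suc (Suc j))"
    using j G_len[OF s] by (simp_all add: fb_nth)
  show ?thesis
  proof (cases "s ! j = (0, Suc j)"; cases "s ! Suc j = (0, Suc (Suc j))")
    assume "s ! j = (0, Suc j)" "s ! Suc j = (0, Suc (Suc j))"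
    then show ?thesis by (simp add: desc_pat_def cless_def fb)
  next
    assume "s ! j = (0, Suc j)" "s ! Suc j \<noteq> (0, Suc (Suc j))"
    with descent_fixed_nonfixed[OF s j] show ?thesis by (simp add: desc_pat_def fb frank_Suc)
  next
    assume "s ! j \<noteq> (0, Suc j)" "s ! Suc j = (0, Suc (Suc j))"
    with descent_nonfixed_fixed[OF s j] show ?thesis by (simp add: desc_pat_def fb frank_Suc)
  next
    assume "s ! j \<noteq> (0, Suc j)" "s ! Suc j \<noteq> (0, Suc (Suc j))"
    with descent_nonfixed_nonfixed[OF s j] show ?thesis by (simp add: desc_pat_def fb frank_Suc)
  qed
qed

lemma maj_via_pattern:
  assumes s: "s \<in> G l n"
  shows "maj s = pmaj (exc_at (Der s)) (des_at (Der s)) (fb s)"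
  unfolding maj_def pmaj_def length_fb
proof (rule sum.cong)
  fix i assume i: "i \<in> {1..<length s}"
  then obtain j where j: "i = Suc j" by (cases i) auto
  then have "Suc j < n" using i G_len[OF s] by simp
  with descent_via_pattern[OF s this] j
  show "(if cless (s ! i) (s ! (i - 1)) then i else 0)
      = (if desc_pat (exc_at (Der s)) (des_at (Der s)) (fb s) i then i else 0)"
    by simp
qed simp

lemma FIX_trueset: "FIX s = trueset (fb s)"
  unfolding FIX_def trueset_def by (auto simp: fb_nth)

lemma fixn_ntrue: "fixn s = ntrue (fb s)"
  by (simp add: fixn_def FIX_trueset card_trueset)

lemma maf_via_pattern: "maf s = maj (Der s) + winv (fb s)"
  unfolding maf_def FIX_trueset fixsum_trueset[symmetric] fixsum_def ..

lemma fb_Words: "fb s \<in> Words (length (Der s)) (fixn s)"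
  by (simp add: Words_def fixn_ntrue length_Der)

lemma col_Der: "col (Der s) = col s"
proof -
  have "col (Der s) = sum_list (map (\<lambda>i. fst (s ! i)) (filter (\<lambda>i. s ! i \<noteq> (0, Suc i)) [0..<length s]))"
    by (simp add: col_def Der_alt NF_filter comp_def)
  also have "\<dots> = sum_list (map (\<lambda>i. fst (s ! i)) [0..<length s])"
    by (rule sum_list_map_filter) auto
  also have "map (\<lambda>i. fst (s ! i)) [0..<length s] = map fst s"
    by (rule nth_equalityI) simp_all
  finally show ?thesis by (simp add: col_def)
qed

lemma exc_card: "exc s = card {j. j < length s \<and> cless (0, Suc j) (s ! j)}"
proof -
  have "{i \<in> {1..length s}. cless (0, i) (s ! (i - 1))} = Suc ` {j. j < length s \<and> cless (0, Suc j) (s ! j)}"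
    by (force simp: image_iff Suc_le_eq gr0_conv_Suc)
  then show ?thesis by (simp add: exc_def card_image)
qed

lemma exc_Der:
  assumes s: "s \<in> G l n"
  shows "exc (Der s) = exc s"
proof -
  define Q where "Q j \<longleftrightarrow> cless (0, Suc j) (s ! j)" for j
  have len: "length s = n" using s by (rule G_len)
  have Q_Der: "Q (NF s ! t) \<longleftrightarrow> cless (0, Suc t) (Der s ! t)" if t: "t < length (NF s)" for t
  proof -
    define j where "j = NF s ! t"
    have "j \<in> set (NF s)" using t by (simp add: j_def)
    then have j: "j < n" "s ! j \<noteq> (0, Suc j)" using len by (auto simp: set_NF)
    note E = nonfixed_entry[OF s j]
    have "frank (fb s) j = t" using frank_falsepos t by (simp add: j_def NF_def)
    then have "cless (0, Suc t) (Der s ! t) \<longleftrightarrow> cless (0, rk s (Suc j)) (fst (s ! j), rk s (snd (s ! j)))"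
      using E(3,4) by simp
    also have "\<dots> \<longleftrightarrow> Q j" using cless_rk[OF E(6,5)] by (simp add: Q_def)
    finally show ?thesis by (simp add: j_def)
  qed
  have "{j. j < length s \<and> Q j} = (\<lambda>t. NF s ! t) ` {t. t < length (NF s) \<and> Q (NF s ! t)}"
  proof (intro equalityI subsetI)
    fix j assume "j \<in> {j. j < length s \<and> Q j}"
    then have "j \<in> set (NF s)" "Q j" by (auto simp: set_NF Q_def cless_def)
    then show "j \<in> (\<lambda>t. NF s ! t) ` {t. t < length (NF s) \<and> Q (NF s ! t)}"
      by (auto simp: in_set_conv_nth)
  next
    fix j assume "j \<in> (\<lambda>t. NF s ! t) ` {t. t < length (NF s) \<and> Q (NF s ! t)}"
    then show "j \<in> {j. j < length s \<and> Q j}" using nth_mem set_NF by fastforce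
  qed
  moreover have "inj_on (\<lambda>t. NF s ! t) {t. t < length (NF s) \<and> Q (NF s ! t)}"
    using distinct_falsepos by (auto simp: inj_on_def NF_def nth_eq_iff_index_eq)
  ultimately have "exc s = card {t. t < length (NF s) \<and> Q (NF s ! t)}"
    by (simp add: exc_card Q_def card_image)
  also have "\<dots> = exc (Der s)"
    using Q_Der by (simp add: exc_card length_Der length_NF cong: conj_cong)
  finally show ?thesis ..
qed

section \<open>Reconstruction of a colored permutation from its encoding\<close>

definition Derang :: "nat \<Rightarrow> nat \<Rightarrow> (nat \<times> nat) list set" where
  "Derang l m = {d \<in> G l m. \<forall>t<m. d ! t \<noteq> (0, Suc t)}"

lemma Der_no_fixed_point:
  assumes s: "s \<in> G l n" and t: "t < length (NF s)"
  shows "Der s ! t \<noteq> (0, Suc t)"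
proof
  assume eq: "Der s ! t = (0, Suc t)"
  define j where "j = NF s ! t"
  have "j \<in> set (NF s)" using t by (simp add: j_def)
  then have j: "j < n" "s ! j \<noteq> (0, Suc j)" using G_len[OF s] by (auto simp: set_NF)
  note E = nonfixed_entry[OF s j]
  have "frank (fb s) j = t" using frank_falsepos t by (simp add: j_def NF_def)
  then have "fst (s ! j) = 0" "rk s (snd (s ! j)) = rk s (Suc j)" using E(3,4) eq by auto
  moreover have "snd (s ! j) = Suc j" using rk_inj[OF E(5,6)] calculation(2) .
  ultimately have "s ! j = (0, Suc j)" by (metis prod.collapse)
  with j(2) show False ..
qed

lemma Der_Derang:
  assumes s: "s \<in> G l n"
  shows "Der s \<in> Derang l (length (Der s))"
proof -
  have len: "length s = n" using s by (rule G_len)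
  have ranks: "map snd (Der s) = map (\<lambda>i. rk s (snd (s ! i))) (NF s)"
    by (simp add: Der_alt)
  have "inj_on (\<lambda>i. rk s (snd (s ! i))) (set (NF s))"
  proof (rule inj_onI)
    fix i j assume ij: "i \<in> set (NF s)" "j \<in> set (NF s)" "rk s (snd (s ! i)) = rk s (snd (s ! j))"
    then have "snd (s ! i) = snd (s ! j)" using rk_inj by (auto simp: VS_def)
    moreover have "i < n" "j < n" using ij len by (auto simp: set_NF)
    ultimately show "i = j" using G_snd_inj[OF s] by blast
  qed
  then have distinct: "distinct (map snd (Der s))"
    unfolding ranks distinct_map using distinct_falsepos by (simp add: NF_def)
  have "set (map snd (Der s)) = rk s ` VS s"
    unfolding ranks VS_def by (auto simp: image_image)
  also have "\<dots> = rk s ` Suc ` (\<lambda>t. NF s ! t) ` {..<length (NF s)}"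
    using nth_image[of "length (NF s)" "NF s"] by (simp add: VS_eq[OF s] atLeast0LessThan)
  also have "\<dots> = (\<lambda>t. rk s (Suc (NF s ! t))) ` {..<length (NF s)}"
    by (simp add: image_image)
  also have "\<dots> = Suc ` {..<length (NF s)}"
    using rk_Suc_NF[OF s] by (auto simp: image_iff)
  finally have range: "set (map snd (Der s)) = {1..length (Der s)}"
    by (simp add: image_Suc_lessThan length_Der length_NF)
  have colors: "\<forall>x\<in>set (Der s). fst x < l"
    using G_fst[OF s] len by (auto simp: Der_alt set_NF)
  show ?thesis
    using distinct range colors Der_no_fixed_point[OF s]
    by (simp add: Derang_def G_def length_Der length_NF)
qed

(* A colored derangement has compatible excedances and descents: between an excedance
   and a non-excedance the order of the two letters is forced. *)
lemma compatible_Derang: "d \<in> Derang l m \<Longrightarrow> compatible (exc_at d) (des_at d) m"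
  unfolding compatible_def
proof (intro allI impI)
  fix t assume d: "d \<in> Derang l m" and t: "1 \<le> t" "t < m"
  then have "d ! t \<noteq> (0, Suc t)" by (simp add: Derang_def)
  moreover obtain c r where "d ! (t - 1) = (c, r)" by fastforce
  moreover obtain c' r' where "d ! t = (c', r')" by fastforce
  ultimately show "(exc_at d t \<and> \<not> exc_at d (Suc t) \<longrightarrow> des_at d t)
      \<and> (\<not> exc_at d t \<and> exc_at d (Suc t) \<longrightarrow> \<not> des_at d t)"
    using t(1) by (auto simp: exc_at_def des_at_def cless_def)
qed

lemma Der_fb_inj:
  assumes s: "s \<in> G l n" and s': "s' \<in> G l n"
    and Der: "Der s = Der s'" and fb: "fb s = fb s'"
  shows "s = s'"
proof (rule nth_equalityI)
  have len: "length s = n" "length s' = n" using s s' by (auto simp: G_len)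
  then show "length s = length s'" by simp
  have NF: "NF s = NF s'" by (simp add: NF_def fb)
  have rk: "rk s = rk s'" unfolding rk_def[abs_def] VS_eq[OF s] VS_eq[OF s'] NF ..
  fix i assume "i < length s"
  then have i: "i < n" using len by simp
  have same_fixed: "s ! i = (0, Suc i) \<longleftrightarrow> s' ! i = (0, Suc i)"
    using fb_nth[of i s] fb_nth[of i s'] fb len i by simp
  show "s ! i = s' ! i"
  proof (cases "s ! i = (0, Suc i)")
    case True
    then show ?thesis using same_fixed by simp
  next
    case False
    note E = nonfixed_entry[OF s i False]
      and E' = nonfixed_entry[OF s' i False[unfolded same_fixed]]
    have "(fst (s ! i), rk s (snd (s ! i))) = (fst (s' ! i), rk s (snd (s' ! i)))"
      using E(3) E'(3) Der fb rk by simp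
    moreover have "snd (s' ! i) \<in> VS s" using E'(5) VS_eq[OF s] VS_eq[OF s'] NF by simp
    ultimately show ?thesis using rk_inj[OF E(5)] by (simp add: prod_eq_iff)
  qed
qed

(* Conversely, insert fixed points into d at the letters True of b and spread the letters
   of d over the remaining positions, keeping their colors and relative order of values. *)
definition rebuild :: "(nat \<times> nat) list \<Rightarrow> bool list \<Rightarrow> (nat \<times> nat) list" where
  "rebuild d b = map (\<lambda>i. if b ! i then (0, Suc i)
       else (fst (d ! frank b i), Suc (falsepos b ! (snd (d ! frank b i) - 1)))) [0..<length b]"

lemma length_rebuild [simp]: "length (rebuild d b) = length b"
  by (simp add: rebuild_def)

context
  fixes l m :: nat and d :: "(nat \<times> nat) list" and b :: "bool list"
  assumes l: "1 \<le> l" and d: "d \<in> Derang l m" and b: "nfalse b = m"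
begin

definition target :: "nat \<Rightarrow> nat" where
  "target i = (if b ! i then i else falsepos b ! (snd (d ! frank b i) - 1))"

(* The value map permutes the positions: it is the identity on the fixed positions and
   the composite of three bijections (rank, value of d, position) on the others. *)
lemma bij_target: "bij_betw target {..<length b} {..<length b}"
proof -
  let ?F = "set (falsepos b)" and ?T = "{i. i < length b \<and> b ! i}"
  have "bij_betw (\<lambda>t. snd (d ! t) - 1) {..<m} {..<m}"
  proof -
    have "bij_betw (\<lambda>x. x - 1) {1..m} {..<m}"
      by (rule bij_betw_byWitness[where f' = Suc]) auto
    then show ?thesis
      using bij_betw_trans[OF G_bij[of d l m]] d by (simp add: Derang_def comp_def)
  qed
  moreover have "bij_betw (\<lambda>t. falsepos b ! t) {..<m} ?F"
    by (rule bij_betw_nth) (simp_all add: distinct_falsepos length_falsepos b)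
  ultimately have "bij_betw ((\<lambda>t. falsepos b ! t) \<circ> (\<lambda>t. snd (d ! t) - 1) \<circ> frank b) ?F ?F"
    using bij_frank[of b] b by (auto intro: bij_betw_trans)
  then have F: "bij_betw target ?F ?F"
    by (rule bij_betw_cong[THEN iffD1, rotated]) (simp add: target_def set_falsepos)
  have T: "bij_betw target ?T ?T"
    using bij_betw_id[of ?T] by (rule bij_betw_cong[THEN iffD1, rotated]) (simp add: target_def)
  have "?F \<inter> ?T = {}" "?F \<union> ?T = {..<length b}" by (auto simp: set_falsepos)
  with bij_betw_combine[OF F T] show ?thesis by simp
qed

lemma rebuild_G: "rebuild d b \<in> G l (length b)"
proof -
  let ?s = "rebuild d b"
  have vals: "map snd ?s = map (Suc \<circ> target) [0..<length b]"
    by (rule nth_equalityI) (simp_all add: rebuild_def target_def)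
  have "inj_on (Suc \<circ> target) {..<length b}"
    using bij_betw_imp_inj_on[OF bij_target] by (simp add: inj_on_def)
  then have distinct: "distinct (map snd ?s)"
    unfolding vals by (simp add: distinct_map atLeast0LessThan)
  have "set (map snd ?s) = Suc ` target ` {..<length b}"
    unfolding vals by (simp add: image_comp atLeast0LessThan)
  also have "\<dots> = {1..length b}"
    using bij_betw_imp_surj_on[OF bij_target] by (simp add: image_Suc_lessThan)
  finally have range: "set (map snd ?s) = {1..length b}" .
  have "fst (d ! frank b i) < l" if "i < length b" "\<not> b ! i" for i
    using G_fst[of d l m] falsepos_frank[OF that] d b by (simp add: Derang_def length_falsepos)
  then have "\<forall>x\<in>set ?s. fst x < l"
    using l by (auto simp: rebuild_def)
  with distinct range show ?thesis by (simp add: G_def)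
qed

lemma d_value: "t < m \<Longrightarrow> snd (d ! t) - 1 < m \<and> Suc (snd (d ! t) - 1) = snd (d ! t)"
  using bij_betw_apply[OF G_bij[of d l m], of t] d by (auto simp: Derang_def)

lemma rebuild_nonfixed:
  assumes "t < m"
  shows "rebuild d b ! (falsepos b ! t) = (fst (d ! t), Suc (falsepos b ! (snd (d ! t) - 1)))"
proof -
  have "falsepos b ! t \<in> set (falsepos b)" using assms b by (simp add: length_falsepos)
  then have "falsepos b ! t < length b" "\<not> b ! (falsepos b ! t)" by (auto simp: set_falsepos)
  moreover have "frank b (falsepos b ! t) = t" using assms b by (simp add: frank_falsepos length_falsepos)
  ultimately show ?thesis by (simp add: rebuild_def)
qed

(* The rebuilt word has exactly the prescribed fixed points: since d has no fixed
   point, no letter placed at a non-fixed position becomes one. *)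
lemma fb_rebuild: "fb (rebuild d b) = b"
proof (rule nth_equalityI)
  show "length (fb (rebuild d b)) = length b" by simp
  fix i assume "i < length (fb (rebuild d b))"
  then have i: "i < length b" by simp
  have "rebuild d b ! i \<noteq> (0, Suc i)" if nf: "\<not> b ! i"
  proof
    assume fixed: "rebuild d b ! i = (0, Suc i)"
    define t where "t = frank b i"
    have t: "t < m" "falsepos b ! t = i"
      using falsepos_frank[OF i nf] b by (simp_all add: t_def length_falsepos)
    have "fst (d ! t) = 0" "falsepos b ! (snd (d ! t) - 1) = falsepos b ! t"
      using fixed i nf t by (simp_all add: rebuild_def t_def)
    moreover have "snd (d ! t) - 1 = t"
      using calculation(2) distinct_falsepos d_value[OF t(1)] t(1) b
      by (simp add: nth_eq_iff_index_eq length_falsepos)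
    ultimately have "d ! t = (0, Suc t)" using d_value[OF t(1)] by (metis prod.collapse)
    with d t(1) show False by (simp add: Derang_def)
  qed
  then show "fb (rebuild d b) ! i = b ! i"
    using i by (cases "b ! i") (simp_all add: fb_nth rebuild_def)
qed

lemma Der_rebuild: "Der (rebuild d b) = d"
proof (rule nth_equalityI)
  let ?s = "rebuild d b"
  have NF: "NF ?s = falsepos b" by (simp add: NF_def fb_rebuild)
  have len_d: "length d = m" using d by (simp add: Derang_def G_def)
  show "length (Der ?s) = length d" by (simp add: length_Der fb_rebuild b len_d)
  fix t assume "t < length (Der ?s)"
  then have t: "t < m" by (simp add: length_Der fb_rebuild b)
  then have tNF: "t < length (NF ?s)" "snd (d ! t) - 1 < length (NF ?s)"
    using d_value[OF t] b by (simp_all add: NF length_falsepos)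
  have "Der ?s ! t = (fst (d ! t), rk ?s (Suc (NF ?s ! (snd (d ! t) - 1))))"
    using Der_nth[OF tNF(1)] rebuild_nonfixed[OF t] by (simp add: NF)
  also have "rk ?s (Suc (NF ?s ! (snd (d ! t) - 1))) = snd (d ! t)"
    using rk_Suc_NF[OF rebuild_G tNF(2)] d_value[OF t] by simp
  finally show "Der ?s ! t = d ! t" by simp
qed

end

lemma fb_bij_fiber:
  assumes l: "1 \<le> l" and x: "x \<in> G l n"
  shows "bij_betw fb {y \<in> G l n. Der y = Der x \<and> fixn y = fixn x} (Words (length (Der x)) (fixn x))"
  unfolding bij_betw_def
proof (intro conjI equalityI subsetI)
  show "inj_on fb {y \<in> G l n. Der y = Der x \<and> fixn y = fixn x}"
  proof (rule inj_onI)
    fix y z assume "y \<in> {y \<in> G l n. Der y = Der x \<and> fixn y = fixn x}"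
      "z \<in> {y \<in> G l n. Der y = Der x \<and> fixn y = fixn x}" "fb y = fb z"
    then show "y = z" using Der_fb_inj[of y l n z] by simp
  qed
  show "w \<in> Words (length (Der x)) (fixn x)" if "w \<in> fb ` {y \<in> G l n. Der y = Der x \<and> fixn y = fixn x}" for w
  proof -
    from that obtain y where "Der y = Der x" "fixn y = fixn x" "w = fb y" by blast
    with fb_Words[of y] show ?thesis by simp
  qed
next
  fix b assume b: "b \<in> Words (length (Der x)) (fixn x)"
  then have nf: "nfalse b = length (Der x)" and nt: "ntrue b = fixn x" by (simp_all add: Words_def)
  note d = Der_Derang[OF x]
  have "length b = n"
    using ntrue_nfalse[of b] ntrue_nfalse[of "fb x"] nf nt G_len[OF x]
    by (simp add: length_Der fixn_ntrue)
  then have "rebuild (Der x) b \<in> G l n" using rebuild_G[OF l d nf] by simp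
  moreover have "Der (rebuild (Der x) b) = Der x" "fb (rebuild (Der x) b) = b"
    using Der_rebuild[OF l d nf] fb_rebuild[OF l d nf] .
  ultimately show "b \<in> fb ` {y \<in> G l n. Der y = Der x \<and> fixn y = fixn x}"
    using nt by (force simp: fixn_ntrue)
qed

(* On every fibre maj and maf have the same distribution, namely that of maj d + winv. *)
lemma fiber_distribution:
  assumes l: "1 \<le> l" and x: "x \<in> G l n"
  defines "C \<equiv> {y \<in> G l n. Der y = Der x \<and> fixn y = fixn x}"
  shows "image_mset maj (mset_set C) = image_mset maf (mset_set C)"
proof -
  define d where "d = Der x"
  define m where "m = length d"
  note bij = fb_bij_fiber[OF l x, folded C_def d_def, folded m_def]
  have fin: "finite C" using finite_G by (simp add: C_def)
  have compat: "compatible (exc_at d) (des_at d) m"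
    using compatible_Derang[OF Der_Derang[OF x]] by (simp add: d_def m_def)
  have "image_mset maj (mset_set C) = pdist (exc_at d) (des_at d) (Words m (fixn x))"
    unfolding pdist_def
    by (rule image_mset_transfer[OF fin bij]) (auto simp: C_def d_def maj_via_pattern)
  also have "\<dots> = mshift (maj d) (qbin (Suc m) (fixn x))"
    using pmaj_distribution[OF compat, of "fixn x"] majD_des_at[of d] by (simp add: m_def)
  also have "\<dots> = image_mset (\<lambda>b. maj d + winv b) (mset_set (Words m (fixn x)))"
    by (simp add: winv_distribution[symmetric] mshift_def multiset.map_comp comp_def)
  also have "\<dots> = image_mset maf (mset_set C)"
    by (rule image_mset_transfer[OF fin bij, symmetric]) (simp add: C_def d_def maf_via_pattern)
  finally show ?thesis .
qed

lemma level_sets_card: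
  assumes fin: "finite A"
    and dist: "\<And>x. x \<in> A \<Longrightarrow>
      image_mset f (mset_set {y \<in> A. \<kappa> y = \<kappa> x}) = image_mset g (mset_set {y \<in> A. \<kappa> y = \<kappa> x})"
  shows "card {y \<in> A. \<kappa> y = c \<and> f y = v} = card {y \<in> A. \<kappa> y = c \<and> g y = v}"
proof (cases "\<exists>x\<in>A. \<kappa> x = c")
  case True
  then obtain x where x: "x \<in> A" "\<kappa> x = c" by blast
  have "count (image_mset f (mset_set {y \<in> A. \<kappa> y = \<kappa> x})) v
      = count (image_mset g (mset_set {y \<in> A. \<kappa> y = \<kappa> x})) v"
    using dist[OF x(1)] by simp
  with fin x(2) show ?thesis by (simp add: count_image_mset_set conj_assoc)
next
  case False
  then have "{y \<in> A. \<kappa> y = c \<and> f y = v} = {}" "{y \<in> A. \<kappa> y = c \<and> g y = v} = {}" by auto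
  then show ?thesis by (simp only: card.empty)
qed

lemma class_preserving_bij:
  assumes fin: "finite A"
    and dist: "\<And>x. x \<in> A \<Longrightarrow>
      image_mset f (mset_set {y \<in> A. \<kappa> y = \<kappa> x}) = image_mset g (mset_set {y \<in> A. \<kappa> y = \<kappa> x})"
  shows "\<exists>\<Psi>. bij_betw \<Psi> A A \<and> (\<forall>x\<in>A. \<kappa> (\<Psi> x) = \<kappa> x \<and> g (\<Psi> x) = f x)"
proof -
  define A1 where "A1 p = {y \<in> A. \<kappa> y = fst p \<and> f y = snd p}" for p
  define A2 where "A2 p = {y \<in> A. \<kappa> y = fst p \<and> g y = snd p}" for p
  have "card (A1 p) = card (A2 p)" for p
    unfolding A1_def A2_def by (rule level_sets_card[OF fin dist])
  then have "\<exists>h. bij_betw h (A1 p) (A2 p)" for p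
    using fin by (intro finite_same_card_bij) (simp_all add: A1_def A2_def)
  then obtain H where H: "\<And>p. bij_betw (H p) (A1 p) (A2 p)" by metis
  define \<Psi> where "\<Psi> x = H (\<kappa> x, f x) x" for x
  have maps: "\<Psi> x \<in> A2 (\<kappa> x, f x)" if "x \<in> A" for x
    using that bij_betw_apply[OF H] by (simp add: \<Psi>_def A1_def)
  then have P: "\<Psi> x \<in> A \<and> \<kappa> (\<Psi> x) = \<kappa> x \<and> g (\<Psi> x) = f x" if "x \<in> A" for x
    using that by (simp add: A2_def)
  have "inj_on \<Psi> A"
  proof (rule inj_onI)
    fix x y assume xy: "x \<in> A" "y \<in> A" "\<Psi> x = \<Psi> y"
    then have same: "(\<kappa> x, f x) = (\<kappa> y, f y)" using P[OF xy(1)] P[OF xy(2)] by simp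
    then have "x \<in> A1 (\<kappa> x, f x)" "y \<in> A1 (\<kappa> x, f x)" using xy by (auto simp: A1_def)
    with xy(3) same H show "x = y" by (auto simp: \<Psi>_def bij_betw_def inj_on_def)
  qed
  moreover have "\<Psi> ` A = A"
  proof (intro equalityI subsetI)
    fix y assume "y \<in> A"
    then have "y \<in> A2 (\<kappa> y, g y)" by (simp add: A2_def)
    then obtain x where "x \<in> A1 (\<kappa> y, g y)" "H (\<kappa> y, g y) x = y"
      using bij_betw_imp_surj_on[OF H] by (metis imageE)
    then have "x \<in> A" "\<Psi> x = y" by (auto simp: \<Psi>_def A1_def)
    then show "y \<in> \<Psi> ` A" by blast
  qed (use P in auto)
  ultimately show ?thesis using P by (auto simp: bij_betw_def)
qed

theorem mainTheorem3:
  fixes l n :: nat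
  assumes "l \<ge> 1" and "n \<ge> 1"
  shows "\<exists>\<Psi>. bij_betw \<Psi> (G l n) (G l n) \<and>
           (\<forall>\<sigma>\<in>G l n. Der (\<Psi> \<sigma>) = Der \<sigma> \<and> maf (\<Psi> \<sigma>) = maj \<sigma> \<and>
              exc (\<Psi> \<sigma>) = exc \<sigma> \<and> fixn (\<Psi> \<sigma>) = fixn \<sigma> \<and> col (\<Psi> \<sigma>) = col \<sigma>)"
proof -
  have "image_mset maj (mset_set {y \<in> G l n. (Der y, fixn y) = (Der x, fixn x)})
      = image_mset maf (mset_set {y \<in> G l n. (Der y, fixn y) = (Der x, fixn x)})"
    if "x \<in> G l n" for x
    using fiber_distribution[OF assms(1) that] by simp
  then obtain \<Psi> where bij: "bij_betw \<Psi> (G l n) (G l n)"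
    and \<Psi>: "\<forall>\<sigma>\<in>G l n. (Der (\<Psi> \<sigma>), fixn (\<Psi> \<sigma>)) = (Der \<sigma>, fixn \<sigma>) \<and> maf (\<Psi> \<sigma>) = maj \<sigma>"
    using class_preserving_bij[OF finite_G, where \<kappa> = "\<lambda>y. (Der y, fixn y)" and f = maj and g = maf]
    by blast
  have "exc (\<Psi> \<sigma>) = exc \<sigma> \<and> col (\<Psi> \<sigma>) = col \<sigma>" if "\<sigma> \<in> G l n" for \<sigma>
    using \<Psi> that exc_Der[OF that] exc_Der[OF bij_betw_apply[OF bij that]]
      col_Der[of \<sigma>] col_Der[of "\<Psi> \<sigma>"] by auto
  with bij \<Psi> show ?thesis by auto
qed

end
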